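(* Let $P$ be a treetope with base $B$ that is in general position. For a vertex $v$ of $P$, call a vertex $w$ a \emph{parent} of $v$ if $w$ is adjacent to $v$ in the graph of $P$ and $w$ is strictly farther than $v$ from the hyperplane spanned by $B$; call a vertex a \emph{root} of $P$ if it has no parent. Then every vertex of $P$ has at most one parent, and $P$ has exactly one root.
   Context: A polytope is the convex hull of a finite set of points in a Euclidean space; its faces, vertices (0-dimensional faces), edges (1-dimensional faces), facets (faces of dimension one less than the polytope) and its graph (1-skeleton: vertices and edges) are defined as usual, the empty set being a face of dimension $-1$. A \emph{treetope} is a polytope $P$ together with a distinguished facet $B$ (the \emph{base}) such that every face $F$ of $P$ whose intersection $F\cap B$ consists of at most one point has dimension at most one. A $d$-treetope is a treetope of dimension $d$. A treetope is in \emph{general position} if no two vertices of $P$ have equal nonzero distance from the hyperplane spanned by $B$. *)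

theory Defs
  imports "HOL-Analysis.Analysis"
begin

definition treetope :: "'a::euclidean_space set \<Rightarrow> 'a set \<Rightarrow> bool" where
  "treetope P B \<longleftrightarrow> polytope P \<and> B facet_of P \<and>
     (\<forall>F. F face_of P \<and> (F \<inter> B = {} \<or> (\<exists>x. F \<inter> B = {x})) \<longrightarrow> aff_dim F \<le> 1)"

definition vertex_of :: "'a::euclidean_space \<Rightarrow> 'a set \<Rightarrow> bool" where
  "vertex_of v P \<longleftrightarrow> {v} face_of P"

definition adjacent_in :: "'a::euclidean_space set \<Rightarrow> 'a \<Rightarrow> 'a \<Rightarrow> bool" where
  "adjacent_in P v w \<longleftrightarrow> vertex_of v P \<and> vertex_of w P \<and> v \<noteq> w \<and> closed_segment v w edge_of P"

definition height :: "'a::euclidean_space set \<Rightarrow> 'a \<Rightarrow> real" where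
  "height B x = infdist x (affine hull B)"

definition general_position_treetope :: "'a::euclidean_space set \<Rightarrow> 'a set \<Rightarrow> bool" where
  "general_position_treetope P B \<longleftrightarrow> treetope P B \<and>
     (\<forall>v w. vertex_of v P \<and> vertex_of w P \<and> v \<noteq> w \<and> height B v = height B w \<longrightarrow> height B v = 0)"

definition parent_of :: "'a::euclidean_space set \<Rightarrow> 'a set \<Rightarrow> 'a \<Rightarrow> 'a \<Rightarrow> bool" where
  "parent_of P B w v \<longleftrightarrow> adjacent_in P v w \<and> height B w > height B v"

definition root_of :: "'a::euclidean_space set \<Rightarrow> 'a set \<Rightarrow> 'a \<Rightarrow> bool" where
  "root_of P B r \<longleftrightarrow> vertex_of r P \<and> \<not> (\<exists>w. parent_of P B w r)"

end

theory Submission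
  imports Defs
begin

text \<open>Write the base as \<open>B = P \<inter> {x. a \<bullet> x = b}\<close> with \<open>P \<subseteq> {x. a \<bullet> x \<le> b}\<close>. The distance from
  the hyperplane of \<open>B\<close> is then a positive multiple of \<open>b - a \<bullet> x\<close>, so the parents of a vertex
  \<open>v\<close> are its neighbours along edges on which \<open>a\<close> decreases.

  Given a functional \<open>p\<close> exposing \<open>v\<close>, take the vertex \<open>w \<noteq> v\<close> maximising the ratio of the
  decrease of \<open>a\<close> to that of \<open>p\<close>. With \<open>c\<close> this maximal ratio, the face of \<open>P\<close> on which
  \<open>c p - a\<close> is maximal meets the level \<open>a \<bullet> x = b\<close> at most in \<open>v\<close>, so by the treetope property
  it is a segment: \<open>w\<close> is unique and spans an edge with \<open>v\<close>. Every descending edge at \<open>v\<close>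
  arises in this way from some \<open>p\<close>, and along a segment of exposing functionals the steepest
  vertex cannot jump, since \<open>[0, 1]\<close> is connected; hence \<open>v\<close> has at most one parent.

  A vertex without a parent minimises \<open>a\<close> over all vertices. Two such vertices would have
  equal height, which general position forces to be \<open>0\<close>, and then \<open>P\<close> would lie in the
  hyperplane of \<open>B\<close>.\<close>

lemma facet_not_in_supporting_hyperplane:
  assumes "B facet_of P" and "B = P \<inter> {x. a \<bullet> x = b}"
  shows "\<not> P \<subseteq> {x. a \<bullet> x = b}"
proof
  assume "P \<subseteq> {x. a \<bullet> x = b}"
  then have "B = P" using assms(2) by auto
  then show False using assms(1) by (simp add: facet_of_def)
qed

lemma affine_hull_facet_eq:
  fixes P :: "'a::euclidean_space set"
  assumes fac: "B facet_of P" and Beq: "B = P \<inter> {x. a \<bullet> x = b}"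
  shows "affine hull B = affine hull P \<inter> {x. a \<bullet> x = b}"
proof (rule affine_dim_equal)
  have "B \<noteq> {}" and dimB: "aff_dim B = aff_dim P - 1"
    using fac by (auto simp: facet_of_def)
  then obtain z where zB: "z \<in> B" by auto
  then show "affine hull B \<noteq> {}" by auto
  have "\<not> affine hull P \<subseteq> {x. a \<bullet> x = b}"
    using facet_not_in_supporting_hyperplane[OF fac Beq] hull_subset[of P affine] by blast
  moreover have "z \<in> affine hull P \<inter> {x. a \<bullet> x = b}"
    using zB Beq hull_subset[of P affine] by blast
  ultimately have "aff_dim (affine hull P \<inter> {x. a \<bullet> x = b}) = aff_dim P - 1"
    by (auto simp: aff_dim_affine_Int_hyperplane)
  then show "aff_dim (affine hull B) = aff_dim (affine hull P \<inter> {x. a \<bullet> x = b})"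
    by (simp add: dimB)
  show "affine hull B \<subseteq> affine hull P \<inter> {x. a \<bullet> x = b}"
    using Beq hull_subset[of P affine] by (intro hull_minimal) (auto intro: affine_Int affine_hyperplane)
qed (simp_all add: affine_Int affine_hyperplane)

lemma infdist_affine_Int_hyperplane:
  fixes A :: "'a::euclidean_space set"
  assumes affA: "affine A" and zH: "z \<in> A" "a \<bullet> z = b" and AnotH: "\<not> A \<subseteq> {x. a \<bullet> x = b}"
  shows "\<exists>c>0. \<forall>x\<in>A. infdist x (A \<inter> {x. a \<bullet> x = b}) = c * \<bar>b - a \<bullet> x\<bar>"
proof -
  define H where "H = A \<inter> {x. a \<bullet> x = b}"
  define S where "S = (+) (- z) ` A"
  have subS: "subspace S"
    unfolding S_def using affine_diffs_subspace[OF affA zH(1)] .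
  have memS: "x - z \<in> S" if "x \<in> A" for x
    unfolding S_def using that by (intro image_eqI[of _ _ x]) auto
  have addS: "z + v \<in> A" if "v \<in> S" for v
    using that by (auto simp: S_def)
  have diffS: "x - y \<in> S" if "x \<in> A" "y \<in> A" for x y
    using subspace_diff[OF subS memS[OF that(1)] memS[OF that(2)]] by simp
  txt \<open>Only the component \<open>a'\<close> of \<open>a\<close> parallel to \<open>A\<close> is seen by points of \<open>A\<close>.\<close>
  obtain a' a'' where a'S: "a' \<in> S" and a: "a = a' + a''" and orth: "\<And>w. w \<in> S \<Longrightarrow> orthogonal a'' w"
    using orthogonal_subspace_decomp_exists[of S a] subS by (metis span_eq_iff)
  have adiff: "a \<bullet> (x - y) = a' \<bullet> (x - y)" if "x \<in> A" "y \<in> A" for x y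
    using orth[OF diffS[OF that]] by (simp add: a inner_add_left orthogonal_def)
  have aa': "a \<bullet> a' = a' \<bullet> a'"
    using orth[OF a'S] by (simp add: a inner_add_left orthogonal_def)
  have a'ne: "a' \<noteq> 0"
  proof
    assume "a' = 0"
    then have "a \<bullet> x = b" if "x \<in> A" for x
      using adiff[OF that zH(1)] zH(2) by (simp add: inner_diff_right)
    then show False using AnotH by auto
  qed
  have moveA: "x + t *\<^sub>R a' \<in> A" if "x \<in> A" for x t
    using addS[of "(x - z) + t *\<^sub>R a'"] memS[OF that] subS a'S
    by (simp add: subspace_add subspace_scale)
  have na: "norm a' > 0" using a'ne by simp
  have "infdist x H = \<bar>b - a \<bullet> x\<bar> / norm a'" if xA: "x \<in> A" for x
  proof (rule antisym)
    define t where "t = (b - a \<bullet> x) / (a' \<bullet> a')"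
    have "a \<bullet> (x + t *\<^sub>R a') = b"
      using a'ne by (simp add: t_def inner_add_right aa')
    then have "x + t *\<^sub>R a' \<in> H"
      using moveA[OF xA] by (simp add: H_def)
    then have "infdist x H \<le> dist x (x + t *\<^sub>R a')" by (rule infdist_le)
    also have "\<dots> = \<bar>t\<bar> * norm a'"
      by (simp add: dist_norm)
    also have "\<dots> = \<bar>b - a \<bullet> x\<bar> / norm a'"
      using na by (simp add: t_def abs_div power2_norm_eq_inner[symmetric] power2_eq_square)
    finally show "infdist x H \<le> \<bar>b - a \<bullet> x\<bar> / norm a'" .
  next
    have Hne: "H \<noteq> {}" using zH by (auto simp: H_def)
    show "\<bar>b - a \<bullet> x\<bar> / norm a' \<le> infdist x H"
      unfolding infdist_notempty[OF Hne]
    proof (rule cINF_greatest[OF Hne])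
      fix y assume "y \<in> H"
      then have "y \<in> A" "a \<bullet> y = b"
        by (simp_all add: H_def)
      then have "\<bar>b - a \<bullet> x\<bar> = \<bar>a' \<bullet> (y - x)\<bar>"
        using adiff[of y x] xA by (simp add: inner_diff_right)
      also have "\<dots> \<le> norm a' * dist x y"
        by (metis Cauchy_Schwarz_ineq2 dist_commute dist_norm)
      finally show "\<bar>b - a \<bullet> x\<bar> / norm a' \<le> dist x y"
        using na by (simp add: divide_le_eq mult.commute)
    qed
  qed
  then show ?thesis
    using na by (intro exI[of _ "1 / norm a'"]) (simp add: H_def)
qed

lemma height_affine:
  fixes P :: "'a::euclidean_space set"
  assumes fac: "B facet_of P" and sub: "P \<subseteq> {x. a \<bullet> x \<le> b}" and Beq: "B = P \<inter> {x. a \<bullet> x = b}"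
  shows "\<exists>k>0. \<forall>x\<in>P. height B x = k * (b - a \<bullet> x)"
proof -
  have PA: "P \<subseteq> affine hull P"
    by (rule hull_subset)
  obtain z where "z \<in> B"
    using fac by (auto simp: facet_of_def)
  then have z: "z \<in> affine hull P" "a \<bullet> z = b"
    using Beq PA by auto
  have "\<not> affine hull P \<subseteq> {x. a \<bullet> x = b}"
    using facet_not_in_supporting_hyperplane[OF fac Beq] PA by blast
  then obtain k where "k > 0"
    and k: "\<forall>x\<in>affine hull P. infdist x (affine hull P \<inter> {x. a \<bullet> x = b}) = k * \<bar>b - a \<bullet> x\<bar>"
    using infdist_affine_Int_hyperplane[OF affine_affine_hull z] by blast
  have "height B x = k * (b - a \<bullet> x)" if "x \<in> P" for x
  proof -
    have "x \<in> affine hull P" "a \<bullet> x \<le> b"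
      using that PA sub by auto
    then show ?thesis
      using k by (simp add: height_def affine_hull_facet_eq[OF fac Beq])
  qed
  with \<open>k > 0\<close> show ?thesis by blast
qed

lemma polytope_finite_extreme_points:
  fixes P :: "'a::euclidean_space set"
  shows "polytope P \<Longrightarrow> finite {v. v extreme_point_of P}"
  using finite_polyhedron_extreme_points polytope_imp_polyhedron by blast

lemma polytope_convex_hull_extreme_points:
  fixes P :: "'a::euclidean_space set"
  shows "polytope P \<Longrightarrow> convex hull {v. v extreme_point_of P} = P"
  using Krein_Milman_Minkowski polytope_imp_compact polytope_imp_convex by metis

definition exposes :: "'a::euclidean_space set \<Rightarrow> 'a \<Rightarrow> 'a \<Rightarrow> bool" where
  "exposes P p v \<longleftrightarrow> (\<forall>z\<in>P. z \<noteq> v \<longrightarrow> p \<bullet> z < p \<bullet> v)"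

text \<open>Only meaningful when \<open>p\<close> exposes \<open>v\<close>; otherwise a denominator may vanish and the
  quotient is the junk value \<open>0\<close>.\<close>
definition steepest :: "'a::euclidean_space set \<Rightarrow> 'a \<Rightarrow> 'a \<Rightarrow> 'a \<Rightarrow> 'a \<Rightarrow> bool" where
  "steepest P a p v x \<longleftrightarrow> x extreme_point_of P \<and> x \<noteq> v \<and>
     (\<forall>z. z extreme_point_of P \<and> z \<noteq> v \<longrightarrow>
        (a \<bullet> v - a \<bullet> z) / (p \<bullet> v - p \<bullet> z) \<le> (a \<bullet> v - a \<bullet> x) / (p \<bullet> v - p \<bullet> x))"

lemma polytope_extreme_point_exposed:
  fixes P :: "'a::euclidean_space set"
  assumes "polytope P" and "v extreme_point_of P"
  obtains p where "exposes P p v"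
proof -
  have "{v} exposed_face_of P"
    using assms exposed_face_of_polyhedron polytope_imp_polyhedron face_of_singleton by blast
  then obtain p d where "P \<subseteq> {x. p \<bullet> x \<le> d}" "{v} = P \<inter> {x. p \<bullet> x = d}"
    by (auto simp: exposed_face_of_def)
  then have "exposes P p v"
    unfolding exposes_def by (metis (mono_tags) Int_iff insertI1 less_eq_real_def mem_Collect_eq singletonD subsetD)
  then show thesis ..
qed

lemma exposes_convex_combination:
  assumes "exposes P p1 v" "exposes P p2 v" "0 \<le> t" "t \<le> 1"
  shows "exposes P ((1 - t) *\<^sub>R p1 + t *\<^sub>R p2) v"
  unfolding exposes_def
proof (intro ballI impI)
  fix z assume "z \<in> P" "z \<noteq> v"
  then have z1: "p1 \<bullet> z < p1 \<bullet> v" and z2: "p2 \<bullet> z < p2 \<bullet> v"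
    using assms(1,2) by (auto simp: exposes_def)
  have "(1 - t) * (p1 \<bullet> z) \<le> (1 - t) * (p1 \<bullet> v)" "t * (p2 \<bullet> z) \<le> t * (p2 \<bullet> v)"
    using z1 z2 assms(3,4) by (simp_all add: mult_left_mono)
  moreover have "(1 - t) * (p1 \<bullet> z) < (1 - t) * (p1 \<bullet> v) \<or> t * (p2 \<bullet> z) < t * (p2 \<bullet> v)"
    using z1 z2 assms(3) by (cases "t = 0") simp_all
  ultimately have "(1 - t) * (p1 \<bullet> z) + t * (p2 \<bullet> z) < (1 - t) * (p1 \<bullet> v) + t * (p2 \<bullet> v)"
    by linarith
  then show "((1 - t) *\<^sub>R p1 + t *\<^sub>R p2) \<bullet> z < ((1 - t) *\<^sub>R p1 + t *\<^sub>R p2) \<bullet> v"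
    by (simp add: inner_add_left)
qed

lemma extreme_point_in_edge_iff:
  fixes P :: "'a::euclidean_space set"
  assumes "closed_segment v w edge_of P"
  shows "z extreme_point_of P \<and> z \<in> closed_segment v w \<longleftrightarrow> z = v \<or> z = w"
  using assms extreme_point_of_face[of "closed_segment v w" P z] extreme_point_of_convex_hull_2[of z v w]
  by (auto simp: edge_of_def segment_convex_hull)

lemma edge_of_endpoints:
  fixes P :: "'a::euclidean_space set"
  assumes "closed_segment v w edge_of P"
  shows "v extreme_point_of P" "w extreme_point_of P" "v \<noteq> w"
  using assms extreme_point_in_edge_iff[OF assms] by (auto simp: edge_of_def)

lemma extreme_points_not_collinear:
  fixes u v w :: "'a::euclidean_space"
  assumes "u extreme_point_of P" "v extreme_point_of P" "w extreme_point_of P"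
    and "u \<noteq> v" "v \<noteq> w" "u \<noteq> w"
  shows "\<not> collinear {u, v, w}"
proof
  assume "collinear {u, v, w}"
  then have "between (v, w) u \<or> between (w, u) v \<or> between (u, v) w"
    by (simp add: collinear_between_cases)
  then show False
    using assms by (auto simp: between_mem_segment extreme_point_of_def open_segment_def)
qed

lemma steepest_iff_cross_multiplied:
  fixes P :: "'a::euclidean_space set"
  assumes "exposes P p v"
  shows "steepest P a p v x \<longleftrightarrow> x extreme_point_of P \<and> x \<noteq> v \<and>
     (\<forall>z. z extreme_point_of P \<and> z \<noteq> v \<longrightarrow>
        (a \<bullet> v - a \<bullet> z) * (p \<bullet> v - p \<bullet> x) \<le> (a \<bullet> v - a \<bullet> x) * (p \<bullet> v - p \<bullet> z))"
proof -
  have pos: "p \<bullet> v - p \<bullet> z > 0" if "z extreme_point_of P" "z \<noteq> v" for z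
    using assms that by (auto simp: exposes_def extreme_point_of_def)
  have "(a \<bullet> v - a \<bullet> z) / (p \<bullet> v - p \<bullet> z) \<le> (a \<bullet> v - a \<bullet> x) / (p \<bullet> v - p \<bullet> x) \<longleftrightarrow>
      (a \<bullet> v - a \<bullet> z) * (p \<bullet> v - p \<bullet> x) \<le> (a \<bullet> v - a \<bullet> x) * (p \<bullet> v - p \<bullet> z)"
    if "z extreme_point_of P" "z \<noteq> v" "x extreme_point_of P" "x \<noteq> v" for z
    using pos[OF that(1,2)] pos[OF that(3,4)] by (simp add: field_simps)
  then show ?thesis
    unfolding steepest_def by blast
qed

lemma ex_steepest:
  fixes P :: "'a::euclidean_space set"
  assumes poly: "polytope P" and p: "exposes P p v" and x: "x extreme_point_of P" "a \<bullet> x < a \<bullet> v"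
  obtains y where "steepest P a p v y" "a \<bullet> y < a \<bullet> v"
proof -
  define s where "s z = (a \<bullet> v - a \<bullet> z) / (p \<bullet> v - p \<bullet> z)" for z
  define Y where "Y = {z. z extreme_point_of P \<and> z \<noteq> v}"
  have "finite Y"
    unfolding Y_def using polytope_finite_extreme_points[OF poly] by simp
  moreover have xY: "x \<in> Y"
    using x by (auto simp: Y_def)
  ultimately have "Max (s ` Y) \<in> s ` Y" and max: "\<And>z. z \<in> Y \<Longrightarrow> s z \<le> Max (s ` Y)"
    by (auto intro: Max_in)
  then obtain y where yY: "y \<in> Y" and "s y = Max (s ` Y)"
    by auto
  then have steep: "steepest P a p v y" and "s x \<le> s y"
    using max xY by (auto simp: steepest_def s_def Y_def)
  have pos: "p \<bullet> v - p \<bullet> z > 0" if "z \<in> Y" for z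
    using p that by (auto simp: exposes_def extreme_point_of_def Y_def)
  have "s x > 0"
    using pos[OF xY] x by (simp add: s_def)
  then have "s y > 0"
    using \<open>s x \<le> s y\<close> by linarith
  then have "a \<bullet> y < a \<bullet> v"
    using pos[OF yY] by (simp add: s_def zero_less_divide_iff)
  with steep show thesis ..
qed

lemma edge_steepest:
  fixes P :: "'a::euclidean_space set"
  assumes poly: "polytope P" and edge: "closed_segment v w edge_of P" and down: "a \<bullet> w < a \<bullet> v"
  obtains p where "exposes P p v" "steepest P a p v w"
proof -
  have v: "v extreme_point_of P" and w: "w extreme_point_of P"
    using edge_of_endpoints[OF edge] by auto
  obtain p0 where p0: "exposes P p0 v"
    using polytope_extreme_point_exposed[OF poly v] .
  have "closed_segment v w exposed_face_of P"
    using edge exposed_face_of_polyhedron[OF polytope_imp_polyhedron[OF poly]] by (auto simp: edge_of_def)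
  then obtain q d where qle: "P \<subseteq> {x. q \<bullet> x \<le> d}" and qeq: "closed_segment v w = P \<inter> {x. q \<bullet> x = d}"
    by (auto simp: exposed_face_of_def)
  define \<delta> where "\<delta> z = q \<bullet> v - q \<bullet> z" for z
  define e where "e z = p0 \<bullet> v - p0 \<bullet> z" for z
  define W where "W = {z. z extreme_point_of P} - {v, w}"
  have qv: "q \<bullet> v = d" and qw: "q \<bullet> w = d"
    using qeq by auto
  have \<delta>_nonneg: "\<delta> z \<ge> 0" if "z \<in> P" for z
    using qle that qv by (auto simp: \<delta>_def)
  have e_pos: "e z > 0" if "z \<in> P" "z \<noteq> v" for z
    using p0 that by (simp add: exposes_def e_def)
  have "finite W"
    unfolding W_def using polytope_finite_extreme_points[OF poly] by simp
  have \<delta>_pos: "\<delta> z > 0" if "z \<in> W" for z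
  proof -
    have "z \<in> P" "z \<notin> closed_segment v w"
      using that extreme_point_in_edge_iff[OF edge, of z] by (auto simp: W_def extreme_point_of_def)
    then show ?thesis
      using qle qeq qv by (force simp: \<delta>_def)
  qed
  txt \<open>Tilting the functional \<open>q\<close>, which exposes the edge, slightly towards \<open>p0\<close> makes it
    expose \<open>v\<close> alone, while \<open>w\<close> stays steepest because all other vertices keep a
    \<open>q\<close>-gap bounded away from zero.\<close>
  have "\<forall>\<^sub>F \<epsilon> in at_right 0. \<epsilon> > 0 \<and>
      (\<forall>z\<in>W. 0 < (a \<bullet> v - a \<bullet> w) * (\<delta> z + \<epsilon> * e z) - (a \<bullet> v - a \<bullet> z) * (\<epsilon> * e w))"
  proof (intro eventually_conj eventually_at_right_less eventually_ball_finite \<open>finite W\<close> ballI)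
    fix z assume "z \<in> W"
    have "((\<lambda>\<epsilon>. (a \<bullet> v - a \<bullet> w) * (\<delta> z + \<epsilon> * e z) - (a \<bullet> v - a \<bullet> z) * (\<epsilon> * e w))
        \<longlongrightarrow> (a \<bullet> v - a \<bullet> w) * (\<delta> z + 0 * e z) - (a \<bullet> v - a \<bullet> z) * (0 * e w)) (at_right 0)"
      by (intro tendsto_intros)
    moreover have "0 < (a \<bullet> v - a \<bullet> w) * (\<delta> z + 0 * e z) - (a \<bullet> v - a \<bullet> z) * (0 * e w)"
      using down \<delta>_pos[OF \<open>z \<in> W\<close>] by simp
    ultimately show "\<forall>\<^sub>F \<epsilon> in at_right 0.
        0 < (a \<bullet> v - a \<bullet> w) * (\<delta> z + \<epsilon> * e z) - (a \<bullet> v - a \<bullet> z) * (\<epsilon> * e w)"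
      by (rule order_tendstoD)
  qed
  then obtain \<epsilon> where \<epsilon>: "\<epsilon> > 0"
    and gap: "\<And>z. z \<in> W \<Longrightarrow> (a \<bullet> v - a \<bullet> z) * (\<epsilon> * e w) < (a \<bullet> v - a \<bullet> w) * (\<delta> z + \<epsilon> * e z)"
    using eventually_happens'[OF trivial_limit_at_right_real] by force
  define p where "p = q + \<epsilon> *\<^sub>R p0"
  have Dp: "p \<bullet> v - p \<bullet> z = \<delta> z + \<epsilon> * e z" for z
    by (simp add: p_def \<delta>_def e_def inner_add_left algebra_simps)
  have exp: "exposes P p v"
    unfolding exposes_def
  proof (intro ballI impI)
    fix z assume "z \<in> P" "z \<noteq> v"
    then have "\<delta> z + \<epsilon> * e z > 0"
      using \<delta>_nonneg e_pos \<epsilon> by (simp add: add_nonneg_pos)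
    then show "p \<bullet> z < p \<bullet> v"
      using Dp[of z] by simp
  qed
  have "(a \<bullet> v - a \<bullet> z) * (p \<bullet> v - p \<bullet> w) \<le> (a \<bullet> v - a \<bullet> w) * (p \<bullet> v - p \<bullet> z)"
    if "z extreme_point_of P" "z \<noteq> v" for z
  proof (cases "z = w")
    case False
    then have "z \<in> W"
      using that by (simp add: W_def)
    then show ?thesis
      using gap[of z] Dp[of z] Dp[of w] qv qw by (simp add: \<delta>_def)
  qed simp
  then have "steepest P a p v w"
    using w down by (auto simp: steepest_iff_cross_multiplied[OF exp])
  with exp show thesis ..
qed

lemma steepest_supporting_functional:
  fixes P :: "'a::euclidean_space set"
  assumes poly: "polytope P" and p: "exposes P p v"
    and x: "steepest P a p v x" "a \<bullet> x < a \<bullet> v"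
  obtains q where "\<And>z. z \<in> P \<Longrightarrow> q \<bullet> z \<le> q \<bullet> v"
    "\<And>z. z \<in> P \<Longrightarrow> z \<noteq> v \<Longrightarrow> q \<bullet> z = q \<bullet> v \<Longrightarrow> a \<bullet> z < a \<bullet> v"
    "\<And>z. z extreme_point_of P \<Longrightarrow> z \<noteq> v \<Longrightarrow> q \<bullet> z = q \<bullet> v \<longleftrightarrow> steepest P a p v z"
proof -
  define s where "s z = (a \<bullet> v - a \<bullet> z) / (p \<bullet> v - p \<bullet> z)" for z
  define c where "c = s x"
  define q where "q = c *\<^sub>R p - a"
  have xP: "x \<in> P" and xv: "x \<noteq> v"
    using x by (auto simp: steepest_def extreme_point_of_def)
  have pos: "p \<bullet> v - p \<bullet> z > 0" if "z \<in> P" "z \<noteq> v" for z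
    using p that by (simp add: exposes_def)
  have c: "c > 0"
    using pos[OF xP xv] x(2) by (simp add: c_def s_def)
  have s_le: "s z \<le> c" if "z extreme_point_of P" "z \<noteq> v" for z
    using x(1) that by (simp add: steepest_def s_def c_def)
  have q_le_iff: "q \<bullet> z \<le> q \<bullet> v \<longleftrightarrow> s z \<le> c" and q_eq_iff: "q \<bullet> z = q \<bullet> v \<longleftrightarrow> s z = c"
    if "z \<in> P" "z \<noteq> v" for z
    using pos[OF that] by (auto simp: q_def s_def inner_diff_left field_simps)
  have "q \<bullet> z \<le> q \<bullet> v" if "z extreme_point_of P" for z
    using that s_le q_le_iff by (cases "z = v") (auto simp: extreme_point_of_def)
  then have "convex hull {z. z extreme_point_of P} \<subseteq> {z. q \<bullet> z \<le> q \<bullet> v}"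
    by (intro hull_minimal) (auto intro: convex_halfspace_le)
  then have le: "q \<bullet> z \<le> q \<bullet> v" if "z \<in> P" for z
    using that polytope_convex_hull_extreme_points[OF poly] by auto
  have lower: "a \<bullet> z < a \<bullet> v" if "z \<in> P" "z \<noteq> v" "q \<bullet> z = q \<bullet> v" for z
  proof -
    have "s z > 0"
      using that q_eq_iff c by simp
    then show ?thesis
      using pos[OF that(1,2)] by (simp add: s_def zero_less_divide_iff)
  qed
  have "q \<bullet> z = q \<bullet> v \<longleftrightarrow> steepest P a p v z" if "z extreme_point_of P" "z \<noteq> v" for z
  proof -
    have "steepest P a p v z \<longleftrightarrow> c \<le> s z"
    proof
      assume "steepest P a p v z"
      then show "c \<le> s z"
        using x(1) by (auto simp: steepest_def s_def c_def)
    next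
      assume "c \<le> s z"
      then have "s y \<le> s z" if "y extreme_point_of P" "y \<noteq> v" for y
        using s_le[OF that] by linarith
      then show "steepest P a p v z"
        using that by (simp add: steepest_def s_def)
    qed
    then show ?thesis
      using that q_eq_iff s_le by (force simp: extreme_point_of_def)
  qed
  with le lower show thesis
    using that by blast
qed

locale treetope_level =
  fixes P :: "'a::euclidean_space set" and a :: 'a and b :: real
  assumes polytope: "polytope P"
    and below: "P \<subseteq> {x. a \<bullet> x \<le> b}"
    and small_faces: "\<And>F c. F face_of P \<Longrightarrow> F \<inter> {x. a \<bullet> x = b} \<subseteq> {c} \<Longrightarrow> aff_dim F \<le> 1"
begin

lemma steepest_face:
  assumes p: "exposes P p v" and v: "v extreme_point_of P"
    and x: "steepest P a p v x" "a \<bullet> x < a \<bullet> v"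
  obtains F where "F face_of P" "collinear F" "v \<in> F"
    "\<And>z. z extreme_point_of P \<Longrightarrow> z \<noteq> v \<Longrightarrow> z \<in> F \<longleftrightarrow> steepest P a p v z"
proof -
  obtain q where le: "\<And>z. z \<in> P \<Longrightarrow> q \<bullet> z \<le> q \<bullet> v"
    and lower: "\<And>z. z \<in> P \<Longrightarrow> z \<noteq> v \<Longrightarrow> q \<bullet> z = q \<bullet> v \<Longrightarrow> a \<bullet> z < a \<bullet> v"
    and steep: "\<And>z. z extreme_point_of P \<Longrightarrow> z \<noteq> v \<Longrightarrow> q \<bullet> z = q \<bullet> v \<longleftrightarrow> steepest P a p v z"
    using steepest_supporting_functional[OF polytope p x] by blast
  have vP: "v \<in> P"
    using v by (simp add: extreme_point_of_def)
  have face: "P \<inter> {z. q \<bullet> z = q \<bullet> v} face_of P"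
    using le by (intro face_of_Int_supporting_hyperplane_le polytope_imp_convex polytope)
  have "z = v" if "z \<in> P" "q \<bullet> z = q \<bullet> v" "a \<bullet> z = b" for z
    using lower[OF that(1) _ that(2)] below vP that(3) by force
  then have "P \<inter> {z. q \<bullet> z = q \<bullet> v} \<inter> {z. a \<bullet> z = b} \<subseteq> {v}"
    by blast
  then have "collinear (P \<inter> {z. q \<bullet> z = q \<bullet> v})"
    using small_faces[OF face] by (simp add: collinear_aff_dim)
  moreover have "z \<in> P \<inter> {z. q \<bullet> z = q \<bullet> v} \<longleftrightarrow> steepest P a p v z"
    if "z extreme_point_of P" "z \<noteq> v" for z
    using that steep[OF that] by (simp add: extreme_point_of_def)
  ultimately show thesis
    using that face vP by blast
qed

lemma steepest_unique:
  assumes "exposes P p v" "v extreme_point_of P"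
    and x: "steepest P a p v x" "a \<bullet> x < a \<bullet> v" and y: "steepest P a p v y"
  shows "y = x"
proof (rule ccontr)
  assume "y \<noteq> x"
  obtain F where "F face_of P" "collinear F" "v \<in> F"
    and F: "\<And>z. z extreme_point_of P \<Longrightarrow> z \<noteq> v \<Longrightarrow> z \<in> F \<longleftrightarrow> steepest P a p v z"
    using steepest_face[OF assms(1-4)] by blast
  have xe: "x extreme_point_of P" "x \<noteq> v" and ye: "y extreme_point_of P" "y \<noteq> v"
    using x(1) y by (simp_all add: steepest_def)
  have "{v, x, y} \<subseteq> F"
    using F[OF xe] F[OF ye] x(1) y \<open>v \<in> F\<close> by simp
  then have "collinear {v, x, y}"
    by (rule collinear_subset[OF \<open>collinear F\<close>])
  then show False
    using extreme_points_not_collinear[OF assms(2) xe(1) ye(1)] xe(2) ye(2) \<open>y \<noteq> x\<close> by auto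
qed

lemma steepest_edge:
  assumes "exposes P p v" "v extreme_point_of P" "steepest P a p v x" "a \<bullet> x < a \<bullet> v"
  shows "closed_segment v x edge_of P"
proof -
  obtain F where face: "F face_of P" and "collinear F" "v \<in> F"
    and F: "\<And>z. z extreme_point_of P \<Longrightarrow> z \<noteq> v \<Longrightarrow> z \<in> F \<longleftrightarrow> steepest P a p v z"
    using steepest_face[OF assms] by blast
  have xv: "x \<noteq> v" "x extreme_point_of P"
    using assms(3) by (auto simp: steepest_def)
  have "z = v \<or> z = x" if "z extreme_point_of F" for z
    using that F[of z] steepest_unique[OF assms, of z] extreme_point_of_face[OF face] by blast
  then have "{z. z extreme_point_of F} \<subseteq> {v, x}"
    by blast
  moreover have "convex hull {z. z extreme_point_of F} = F"
    by (rule polytope_convex_hull_extreme_points[OF face_of_polytope_polytope[OF polytope face]])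
  ultimately have "F \<subseteq> closed_segment v x"
    using hull_mono[of "{z. z extreme_point_of F}" "{v, x}" convex] by (simp add: segment_convex_hull)
  moreover have "closed_segment v x \<subseteq> F"
    using face_of_imp_convex[OF face] \<open>v \<in> F\<close> F[OF xv(2,1)] assms(3)
    by (simp add: closed_segment_subset)
  ultimately have "F = closed_segment v x"
    by blast
  then show ?thesis
    using face xv(1) by (simp add: edge_of_def segment_convex_hull aff_dim_convex_hull)
qed

text \<open>The steepest descending vertex does not depend on the exposing functional: along the
  segment from \<open>p1\<close> to \<open>p2\<close> every functional exposes \<open>v\<close> and has a unique steepest vertex,
  and the parameter sets belonging to the different vertices are closed, so by
  connectedness of \<open>{0..1}\<close> only one of them is nonempty.\<close>
lemma steepest_independent:
  assumes v: "v extreme_point_of P"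
    and p1: "exposes P p1 v" "steepest P a p1 v w1" "a \<bullet> w1 < a \<bullet> v"
    and p2: "exposes P p2 v" "steepest P a p2 v w2" "a \<bullet> w2 < a \<bullet> v"
  shows "w1 = w2"
proof (rule ccontr)
  assume "w1 \<noteq> w2"
  define pt where "pt t = (1 - t) *\<^sub>R p1 + t *\<^sub>R p2" for t
  define T where "T x = {t \<in> {0..1}. steepest P a (pt t) v x}" for x
  define X where "X = {x. x extreme_point_of P \<and> a \<bullet> x < a \<bullet> v}"
  have exposes_pt: "exposes P (pt t) v" if "t \<in> {0..1}" for t
    using exposes_convex_combination[OF p1(1) p2(1)] that by (simp add: pt_def)
  have closed_T: "closed (T x)" for x
  proof -
    have "T x = {0..1} \<inter> {t. x extreme_point_of P \<and> x \<noteq> v \<and>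
        (\<forall>z. z extreme_point_of P \<and> z \<noteq> v \<longrightarrow>
          (a \<bullet> v - a \<bullet> z) * (pt t \<bullet> v - pt t \<bullet> x) \<le> (a \<bullet> v - a \<bullet> x) * (pt t \<bullet> v - pt t \<bullet> z))}"
      using steepest_iff_cross_multiplied[OF exposes_pt] by (auto simp: T_def)
    also have "closed \<dots>"
      unfolding pt_def
      by (intro closed_Int closed_atLeastAtMost closed_Collect_conj closed_Collect_const
          closed_Collect_all closed_Collect_imp open_Collect_const closed_Collect_le continuous_intros)
    finally show ?thesis .
  qed
  have "finite X"
    using polytope_finite_extreme_points[OF polytope] by (simp add: X_def)
  have T_unique: "x = y" if "t \<in> T x" "t \<in> T y" "x \<in> X" for t x y
    using steepest_unique[OF exposes_pt v] that by (auto simp: T_def X_def)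
  have "{0..1} \<subseteq> T w1 \<union> (\<Union>x\<in>X - {w1}. T x)"
  proof
    fix t :: real assume t: "t \<in> {0..1}"
    obtain y where "steepest P a (pt t) v y" "a \<bullet> y < a \<bullet> v"
      using ex_steepest[OF polytope exposes_pt[OF t]] p1(2,3) by (auto simp: steepest_def)
    then have "y \<in> X" "t \<in> T y"
      using t by (auto simp: X_def T_def steepest_def)
    then show "t \<in> T w1 \<union> (\<Union>x\<in>X - {w1}. T x)"
      by (cases "y = w1") auto
  qed
  then have "{0..1} = T w1 \<union> (\<Union>x\<in>X - {w1}. T x)"
    by (auto simp: T_def)
  moreover have "0 \<in> T w1" "1 \<in> T w2" "w2 \<in> X - {w1}"
    using p1 p2 \<open>w1 \<noteq> w2\<close> by (auto simp: T_def X_def pt_def steepest_def)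
  moreover have "closed (\<Union>x\<in>X - {w1}. T x)"
    using \<open>finite X\<close> closed_T by blast
  ultimately have "T w1 \<inter> (\<Union>x\<in>X - {w1}. T x) \<noteq> {}"
    by (intro connected_as_closed_union[OF connected_Icc] closed_T) auto
  moreover have "w1 \<in> X"
    using p1 by (auto simp: X_def steepest_def)
  ultimately show False
    using T_unique by blast
qed

lemma descending_edge_unique:
  assumes "closed_segment v w1 edge_of P" "a \<bullet> w1 < a \<bullet> v"
    and "closed_segment v w2 edge_of P" "a \<bullet> w2 < a \<bullet> v"
  shows "w1 = w2"
proof -
  obtain p1 p2 where "exposes P p1 v" "steepest P a p1 v w1" "exposes P p2 v" "steepest P a p2 v w2"
    using edge_steepest[OF polytope assms(1,2)] edge_steepest[OF polytope assms(3,4)] by metis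
  moreover have "v extreme_point_of P"
    using edge_of_endpoints(1)[OF assms(1)] .
  ultimately show ?thesis
    using steepest_independent assms(2,4) by blast
qed

lemma no_descending_edge_iff_lowest:
  assumes v: "v extreme_point_of P"
  shows "(\<nexists>w. closed_segment v w edge_of P \<and> a \<bullet> w < a \<bullet> v) \<longleftrightarrow> (\<forall>w. w extreme_point_of P \<longrightarrow> a \<bullet> v \<le> a \<bullet> w)"
proof
  assume none: "\<nexists>w. closed_segment v w edge_of P \<and> a \<bullet> w < a \<bullet> v"
  show "\<forall>w. w extreme_point_of P \<longrightarrow> a \<bullet> v \<le> a \<bullet> w"
  proof (intro allI impI leI notI)
    fix x assume "x extreme_point_of P" "a \<bullet> x < a \<bullet> v"
    obtain p where p: "exposes P p v"
      using polytope_extreme_point_exposed[OF polytope v] .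
    obtain w where "steepest P a p v w" "a \<bullet> w < a \<bullet> v"
      using ex_steepest[OF polytope p \<open>x extreme_point_of P\<close> \<open>a \<bullet> x < a \<bullet> v\<close>] .
    then show False
      using steepest_edge[OF p v] none by blast
  qed
next
  assume "\<forall>w. w extreme_point_of P \<longrightarrow> a \<bullet> v \<le> a \<bullet> w"
  then show "\<nexists>w. closed_segment v w edge_of P \<and> a \<bullet> w < a \<bullet> v"
    by (auto dest: edge_of_endpoints(2) simp: not_less)
qed

lemma ex1_lowest_vertex:
  assumes "P \<noteq> {}" and "\<not> P \<subseteq> {x. a \<bullet> x = b}"
    and level: "\<And>v w. v extreme_point_of P \<Longrightarrow> w extreme_point_of P \<Longrightarrow> v \<noteq> w \<Longrightarrow>
      a \<bullet> v = a \<bullet> w \<Longrightarrow> a \<bullet> v = b"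
  shows "\<exists>!r. r extreme_point_of P \<and> (\<forall>w. w extreme_point_of P \<longrightarrow> a \<bullet> r \<le> a \<bullet> w)"
proof -
  define V where "V = {v. v extreme_point_of P}"
  have PV: "convex hull V = P"
    unfolding V_def by (rule polytope_convex_hull_extreme_points[OF polytope])
  have "finite V" "V \<noteq> {}"
    using polytope_finite_extreme_points[OF polytope] PV \<open>P \<noteq> {}\<close> by (auto simp: V_def)
  then have "Min ((\<bullet>) a ` V) \<in> (\<bullet>) a ` V"
    by (intro Min_in) auto
  then obtain r where r: "r \<in> V" "a \<bullet> r = Min ((\<bullet>) a ` V)"
    by auto
  have "a \<bullet> r \<le> a \<bullet> w" if "w extreme_point_of P" for w
  proof -
    have "w \<in> V"
      using that by (simp add: V_def)
    then show ?thesis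
      using r(2) Min_le[OF finite_imageI[OF \<open>finite V\<close>] imageI[of w V "(\<bullet>) a"]] by simp
  qed
  then have lowest: "r extreme_point_of P \<and> (\<forall>w. w extreme_point_of P \<longrightarrow> a \<bullet> r \<le> a \<bullet> w)"
    using r(1) by (simp add: V_def)
  show ?thesis
  proof (rule ex1I[of _ r])
    fix r' assume r': "r' extreme_point_of P \<and> (\<forall>w. w extreme_point_of P \<longrightarrow> a \<bullet> r' \<le> a \<bullet> w)"
    show "r' = r"
    proof (rule ccontr)
      assume "r' \<noteq> r"
      moreover have "a \<bullet> r' = a \<bullet> r"
        using lowest r' by (meson order_antisym)
      ultimately have "a \<bullet> r = b"
        using level[of r' r] lowest r' by simp
      then have "a \<bullet> w = b" if "w extreme_point_of P" for w
        using lowest that below extreme_point_of_def[of w P] by fastforce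
      then have "convex hull V \<subseteq> {x. a \<bullet> x = b}"
        by (intro hull_minimal convex_hyperplane) (auto simp: V_def)
      then show False
        using assms(2) PV by simp
    qed
  qed (rule lowest)
qed

end

lemma treetope_imp_level:
  fixes P B :: "'a::euclidean_space set"
  assumes "treetope P B"
  obtains a b where "treetope_level P a b" "B = P \<inter> {x. a \<bullet> x = b}"
proof -
  have poly: "polytope P" and fac: "B facet_of P"
    and tree: "\<And>F. F face_of P \<Longrightarrow> F \<inter> B = {} \<or> (\<exists>x. F \<inter> B = {x}) \<Longrightarrow> aff_dim F \<le> 1"
    using assms by (auto simp: treetope_def)
  have "B exposed_face_of P"
    using exposed_face_of_polyhedron[OF polytope_imp_polyhedron[OF poly]] fac by (auto simp: facet_of_def)
  then obtain a b where below: "P \<subseteq> {x. a \<bullet> x \<le> b}" and Beq: "B = P \<inter> {x. a \<bullet> x = b}"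
    by (auto simp: exposed_face_of_def)
  have "treetope_level P a b"
  proof
    fix F c assume F: "F face_of P" "F \<inter> {x. a \<bullet> x = b} \<subseteq> {c}"
    then have "F \<inter> B \<subseteq> {c}"
      using Beq by blast
    then show "aff_dim F \<le> 1"
      using tree[OF F(1)] by (auto simp: subset_singleton_iff)
  qed (fact poly below)+
  with Beq that show thesis
    by blast
qed

theorem mainTheorem1:
  fixes P B :: "'a::euclidean_space set"
  assumes "general_position_treetope P B"
  shows "(\<forall>v. vertex_of v P \<longrightarrow> (\<forall>w1 w2. parent_of P B w1 v \<and> parent_of P B w2 v \<longrightarrow> w1 = w2))
         \<and> (\<exists>!r. root_of P B r)"
proof -
  have tt: "treetope P B" and fac: "B facet_of P"
    and gp: "\<And>v w. vertex_of v P \<Longrightarrow> vertex_of w P \<Longrightarrow> v \<noteq> w \<Longrightarrow> height B v = height B w \<Longrightarrow> height B v = 0"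
    using assms by (auto simp: general_position_treetope_def treetope_def)
  obtain a b where level: "treetope_level P a b" and Beq: "B = P \<inter> {x. a \<bullet> x = b}"
    using treetope_imp_level[OF tt] .
  interpret treetope_level P a b
    by (fact level)
  obtain k where "k > 0" and height: "\<And>x. x \<in> P \<Longrightarrow> height B x = k * (b - a \<bullet> x)"
    using height_affine[OF fac below Beq] by blast
  have vertex: "vertex_of v P \<longleftrightarrow> v extreme_point_of P" for v
    by (simp add: vertex_of_def face_of_singleton)
  have parent: "parent_of P B w v \<longleftrightarrow> closed_segment v w edge_of P \<and> a \<bullet> w < a \<bullet> v" for v w
  proof -
    have "height B v < height B w \<longleftrightarrow> a \<bullet> w < a \<bullet> v" if "v extreme_point_of P" "w extreme_point_of P"
      using that height[of v] height[of w] \<open>k > 0\<close> by (auto simp: extreme_point_of_def)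
    then show ?thesis
      using edge_of_endpoints[of v w P] by (auto simp: parent_of_def adjacent_in_def vertex)
  qed
  have root: "root_of P B r \<longleftrightarrow> r extreme_point_of P \<and> (\<forall>w. w extreme_point_of P \<longrightarrow> a \<bullet> r \<le> a \<bullet> w)" for r
    using no_descending_edge_iff_lowest[of r] by (auto simp: root_of_def vertex parent)
  have "\<exists>!r. r extreme_point_of P \<and> (\<forall>w. w extreme_point_of P \<longrightarrow> a \<bullet> r \<le> a \<bullet> w)"
  proof (rule ex1_lowest_vertex)
    show "P \<noteq> {}" "\<not> P \<subseteq> {x. a \<bullet> x = b}"
      using fac facet_not_in_supporting_hyperplane[OF fac Beq] by (auto simp: facet_of_def)
    show "a \<bullet> v = b" if "v extreme_point_of P" "w extreme_point_of P" "v \<noteq> w" "a \<bullet> v = a \<bullet> w" for v w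
      using gp[of v w] height that \<open>k > 0\<close> by (simp add: vertex extreme_point_of_def)
  qed
  then show ?thesis
    using descending_edge_unique by (simp add: root parent) blast
qed

end
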